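(* Assume Schanuel's conjecture $(S)$. Then the numbers $\sqrt{2}^{\,\sqrt{2}^{\,\sqrt{2}}}$, $i^{\,i^{\,i}}$, and $i^{\,e^{\pi}}$ are transcendental.
   Context: Schanuel's conjecture $(S)$: if $\alpha_1,\dots,\alpha_n\in\mathbb{C}$ are linearly independent over $\mathbb{Q}$, then the transcendence degree of $\mathbb{Q}(\alpha_1,\dots,\alpha_n,e^{\alpha_1},\dots,e^{\alpha_n})$ over $\mathbb{Q}$ is at least $n$. Here $i=\sqrt{-1}$, towers are read from the top ($a^{b^{c}}=a^{(b^c)}$), and complex powers use the principal logarithm, $a^b=e^{b\,\mathrm{Log}\,a}$ (so $\mathrm{Log}\, i=\pi i/2$). *)

theory Defs
  imports "HOL-Analysis.Analysis" "HOL-Computational_Algebra.Polynomial"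
begin

definition lin_indep_Q :: "complex list \<Rightarrow> bool" where
  "lin_indep_Q xs \<longleftrightarrow>
     (\<forall>q :: nat \<Rightarrow> rat. (\<Sum>i<length xs. of_rat (q i) * xs ! i) = 0 \<longrightarrow> (\<forall>i<length xs. q i = 0))"

text \<open>A polynomial is given by a finite set E of exponent vectors and coefficients c.\<close>
definition alg_indep_Q :: "complex list \<Rightarrow> bool" where
  "alg_indep_Q xs \<longleftrightarrow>
     (\<forall>(E :: (nat \<Rightarrow> nat) set) (c :: (nat \<Rightarrow> nat) \<Rightarrow> rat).
        finite E \<and> (\<forall>\<alpha>\<in>E. \<forall>i. length xs \<le> i \<longrightarrow> \<alpha> i = 0) \<and>
        (\<Sum>\<alpha>\<in>E. of_rat (c \<alpha>) * (\<Prod>i<length xs. (xs ! i) ^ \<alpha> i)) = 0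
        \<longrightarrow> (\<forall>\<alpha>\<in>E. c \<alpha> = 0))"

definition subfield_C :: "complex set \<Rightarrow> bool" where
  "subfield_C F \<longleftrightarrow> 0 \<in> F \<and> 1 \<in> F \<and>
     (\<forall>x\<in>F. \<forall>y\<in>F. x + y \<in> F \<and> x - y \<in> F \<and> x * y \<in> F) \<and>
     (\<forall>x\<in>F. x \<noteq> 0 \<longrightarrow> inverse x \<in> F)"

definition gen_field :: "complex set \<Rightarrow> complex set" where
  "gen_field S = \<Inter>{F. subfield_C F \<and> S \<subseteq> F}"

definition trdeg_ge :: "complex set \<Rightarrow> nat \<Rightarrow> bool" where
  "trdeg_ge K n \<longleftrightarrow> (\<exists>xs. distinct xs \<and> set xs \<subseteq> K \<and> length xs = n \<and> alg_indep_Q xs)"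

definition schanuel :: bool where
  "schanuel \<longleftrightarrow> (\<forall>xs :: complex list. lin_indep_Q xs \<longrightarrow>
      trdeg_ge (gen_field (set xs \<union> exp ` set xs)) (length xs))"

end

theory Submission
  imports Defs "HOL-Computational_Algebra.Primes"
begin

text \<open>Each case follows one pattern: if the number were algebraic, we would find
  \<open>n\<close> numbers, linearly independent over \<open>\<rat>\<close>, which lie together with their exponentials in
  a field generated by \<open>n - 1\<close> numbers and some algebraic numbers. Such a field has
  transcendence degree at most \<open>n - 1\<close>, contradicting Schanuel.

  The field \<open>\<rat>(ts, as)\<close> (\<open>as\<close> algebraic) consists of quotients of elements of the
  \<open>\<rat>\<close>-spaces \<open>layer N\<close>, spanned by monomials of degree \<open>< N\<close> in the \<open>ts\<close>; these are
  closed under products up to adding levels, and have dimension \<open>O(N ^ length ts)\<close>. After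
  clearing denominators, the \<open>(D + 1) ^ (length ts + 1)\<close> monomials of degree \<open>\<le> D\<close> in
  \<open>length ts + 1\<close> elements land in a layer of dimension \<open>O(D ^ length ts)\<close>, so for large \<open>D\<close>
  they are linearly dependent: the elements are algebraically dependent.\<close>

interpretation Q: vector_space "\<lambda>(q::rat) (x::complex). of_rat q * x"
  by standard (auto simp: algebra_simps of_rat_add of_rat_mult)

lemma Q_combination_vanishes:
  fixes f :: "'a \<Rightarrow> complex"
  assumes "finite M" "finite B" "f ` B \<subseteq> Q.span M" "card M < card B"
  obtains c where "(\<Sum>\<beta>\<in>B. of_rat (c \<beta>) * f \<beta>) = 0" "\<exists>\<beta>\<in>B. c \<beta> \<noteq> 0"
proof (cases "inj_on f B")
  case True
  have "Q.dependent (f ` B)"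
    using Q.independent_span_bound[OF assms(1) _ assms(3)] assms(4) True
    by (auto simp: card_image)
  then obtain u where u: "\<exists>w\<in>f ` B. u w \<noteq> 0" "(\<Sum>w\<in>f ` B. of_rat (u w) * w) = 0"
    using Q.dependent_finite[OF finite_imageI[OF assms(2)]] by blast
  have "(\<Sum>\<beta>\<in>B. of_rat (u (f \<beta>)) * f \<beta>) = 0"
    using u(2) True by (simp add: sum.reindex)
  with u(1) show ?thesis by (intro that[of "u \<circ> f"]) auto
next
  case False
  then obtain b1 b2 where b: "b1 \<in> B" "b2 \<in> B" "b1 \<noteq> b2" "f b1 = f b2"
    unfolding inj_on_def by blast
  let ?c = "\<lambda>\<beta>. if \<beta> = b1 then 1 else if \<beta> = b2 then -1 else (0::rat)"
  have "(\<Sum>\<beta>\<in>B. of_rat (?c \<beta>) * f \<beta>) = (\<Sum>\<beta>\<in>{b1, b2}. of_rat (?c \<beta>) * f \<beta>)"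
    using b assms(2) by (intro sum.mono_neutral_right) auto
  also have "\<dots> = 0" using b by simp
  finally show ?thesis using b by (intro that[of ?c]) auto
qed

lemma Q_span_mult:
  assumes "x \<in> Q.span A" "y \<in> Q.span B"
    and "\<And>a b. a \<in> A \<Longrightarrow> b \<in> B \<Longrightarrow> a * b \<in> Q.span C"
  shows "x * y \<in> Q.span C"
proof -
  have left: "a * y \<in> Q.span C" if a: "a \<in> A" for a
    using assms(2)
  proof (induction rule: Q.span_induct_alt)
    case (step c b z)
    have "a * (of_rat c * b + z) = of_rat c * (a * b) + a * z" by (simp add: algebra_simps)
    then show ?case using step a assms(3) by (simp add: Q.span_add Q.span_scale)
  qed (simp add: Q.span_zero)
  show ?thesis
    using assms(1)
  proof (induction rule: Q.span_induct_alt)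
    case (step c b z)
    have "(of_rat c * b + z) * y = of_rat c * (b * y) + z * y" by (simp add: algebra_simps)
    then show ?case using step left by (simp add: Q.span_add Q.span_scale)
  qed (simp add: Q.span_zero)
qed

definition monomial :: "complex list \<Rightarrow> (nat \<Rightarrow> nat) \<Rightarrow> complex" where
  "monomial gs e = (\<Prod>j<length gs. gs ! j ^ e j)"

definition monomials :: "complex list \<Rightarrow> (nat \<Rightarrow> nat) \<Rightarrow> complex set" where
  "monomials gs D = monomial gs ` (PiE {..<length gs} (\<lambda>j. {..<D j}))"

definition bounded_span :: "complex list \<Rightarrow> (nat \<Rightarrow> nat) \<Rightarrow> complex set" where
  "bounded_span gs D = Q.span (monomials gs D)"

lemma monomial_cong: "(\<And>j. j < length gs \<Longrightarrow> e j = e' j) \<Longrightarrow> monomial gs e = monomial gs e'"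
  unfolding monomial_def by (rule prod.cong) auto

lemma monomial_mult: "monomial gs e * monomial gs e' = monomial gs (\<lambda>j. e j + e' j)"
  unfolding monomial_def by (simp add: power_add prod.distrib)

lemma monomial_zero: "monomial gs (\<lambda>_. 0) = 1"
  by (simp add: monomial_def)

lemma monomial_single:
  assumes "j < length gs"
  shows "monomial gs (\<lambda>i. if i = j then k else 0) = gs ! j ^ k"
proof -
  have "monomial gs (\<lambda>i. if i = j then k else 0) = (\<Prod>i<length gs. if i = j then gs ! j ^ k else 1)"
    unfolding monomial_def by (rule prod.cong) auto
  also have "\<dots> = gs ! j ^ k" using assms by (simp add: prod.delta)
  finally show ?thesis .
qed

lemma monomialsI:
  assumes "\<And>j. j < length gs \<Longrightarrow> e j < D j"
  shows "monomial gs e \<in> monomials gs D"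
proof -
  have "restrict e {..<length gs} \<in> PiE {..<length gs} (\<lambda>j. {..<D j})" using assms by auto
  moreover have "monomial gs (restrict e {..<length gs}) = monomial gs e" by (rule monomial_cong) auto
  ultimately show ?thesis unfolding monomials_def by (metis image_eqI)
qed

lemma monomialsE:
  assumes "x \<in> monomials gs D"
  obtains e where "x = monomial gs e" "\<And>j. j < length gs \<Longrightarrow> e j < D j"
proof -
  from assms obtain f where f: "f \<in> PiE {..<length gs} (\<lambda>j. {..<D j})" "x = monomial gs f"
    unfolding monomials_def by blast
  show ?thesis by (rule that[OF f(2)]) (use f(1) in \<open>auto simp: PiE_iff\<close>)
qed

lemma bounded_spanI: "(\<And>j. j < length gs \<Longrightarrow> e j < D j) \<Longrightarrow> monomial gs e \<in> bounded_span gs D"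
  unfolding bounded_span_def by (intro Q.span_base monomialsI)

lemma finite_monomials: "finite (monomials gs D)"
  unfolding monomials_def by (intro finite_imageI finite_PiE) auto

lemma card_monomials: "card (monomials gs D) \<le> (\<Prod>j<length gs. D j)"
proof -
  have "card (monomials gs D) \<le> card (PiE {..<length gs} (\<lambda>j. {..<D j}))"
    unfolding monomials_def by (rule card_image_le) (intro finite_PiE, auto)
  also have "\<dots> = (\<Prod>j<length gs. D j)" by (simp add: card_PiE)
  finally show ?thesis .
qed

lemma bounded_span_span [simp]: "Q.span (bounded_span gs D) = bounded_span gs D"
  unfolding bounded_span_def by (rule Q.span_span)

lemma bounded_span_mono:
  assumes "\<And>j. j < length gs \<Longrightarrow> D j \<le> D' j"
  shows "bounded_span gs D \<subseteq> bounded_span gs D'"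
proof -
  have "monomials gs D \<subseteq> bounded_span gs D'"
  proof
    fix x assume "x \<in> monomials gs D"
    then obtain e where "x = monomial gs e" "\<And>j. j < length gs \<Longrightarrow> e j < D j"
      by (rule monomialsE) auto
    then show "x \<in> bounded_span gs D'" using assms by (metis bounded_spanI order_less_le_trans)
  qed
  then show ?thesis by (metis Q.span_mono bounded_span_def bounded_span_span)
qed

text \<open>Multiplying two monomials adds exponents, so bounds add up (minus one).\<close>
lemma bounded_span_mult:
  assumes "x \<in> bounded_span gs D" "y \<in> bounded_span gs D'"
  shows "x * y \<in> bounded_span gs (\<lambda>j. D j + D' j - 1)"
  using assms unfolding bounded_span_def
proof (rule Q_span_mult)
  fix a b assume "a \<in> monomials gs D" "b \<in> monomials gs D'"
  then obtain e e' where "a = monomial gs e" "\<And>j. j < length gs \<Longrightarrow> e j < D j"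
      "b = monomial gs e'" "\<And>j. j < length gs \<Longrightarrow> e' j < D' j"
    by (metis monomialsE)
  then show "a * b \<in> Q.span (monomials gs (\<lambda>j. D j + D' j - 1))"
    by (simp add: monomial_mult) (intro Q.span_base monomialsI, fastforce)

qed

lemma root_power_in_span:
  fixes a :: complex
  assumes "\<forall>i. coeff p i \<in> \<rat>" "p \<noteq> 0" "poly p a = 0"
  shows "a ^ n \<in> Q.span ((\<lambda>k. a ^ k) ` {..<degree p})"
proof (induction n rule: less_induct)
  case (less n)
  define d where "d = degree p"
  have "\<forall>i. \<exists>q. coeff p i = of_rat q" using assms(1) by (auto elim: Rats_cases)
  then obtain r where r: "\<And>i. coeff p i = of_rat (r i)" by metis
  have lc: "of_rat (r d) \<noteq> (0::complex)" using assms(2) r[of d] d_def by auto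
  show ?case
  proof (cases "n < d")
    case True then show ?thesis by (intro Q.span_base) (auto simp: d_def)
  next
    case False
    let ?S = "(\<Sum>k<d. of_rat (r k) * a ^ k)"
    have "0 = (\<Sum>k\<le>d. coeff p k * a ^ k)" using assms(3) by (simp add: poly_altdef d_def)
    also have "\<dots> = ?S + of_rat (r d) * a ^ d"
      by (simp add: r lessThan_Suc_atMost[symmetric])
    finally have "of_rat (r d) * a ^ d = - ?S" by (metis add_eq_0_iff)
    then have "a ^ d = - ?S / of_rat (r d)" using lc by (simp add: field_simps)
    also have "\<dots> = (\<Sum>k<d. - (of_rat (r k) * a ^ k) / of_rat (r d))"
      by (simp add: sum_divide_distrib sum_negf)
    also have "\<dots> = (\<Sum>k<d. of_rat (- r k / r d) * a ^ k)"
      by (rule sum.cong) (simp_all add: of_rat_divide of_rat_minus)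
    finally have ad: "a ^ d = (\<Sum>k<d. of_rat (- r k / r d) * a ^ k)" .
    have "a ^ n = a ^ (n - d) * a ^ d" using False by (simp add: power_add[symmetric])
    also have "\<dots> = (\<Sum>k<d. of_rat (- r k / r d) * a ^ (n - d + k))"
      unfolding ad by (simp add: sum_distrib_left power_add algebra_simps)
    also have "\<dots> \<in> Q.span ((\<lambda>k. a ^ k) ` {..<degree p})"
      by (intro Q.span_sum Q.span_scale less.IH) (use False in auto)
    finally show ?thesis .
  qed
qed

lemma bounded_span_reduce:
  assumes j: "j < length gs"
    and p: "\<forall>i. coeff p i \<in> \<rat>" "p \<noteq> 0" "poly p (gs ! j) = 0"
  shows "bounded_span gs D \<subseteq> bounded_span gs (D(j := degree p))"
proof -
  let ?d = "degree p"
  have power: "gs ! j ^ k \<in> bounded_span gs (\<lambda>i. if i = j then ?d else 1)" for k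
  proof -
    have "(\<lambda>k. gs ! j ^ k) ` {..<?d} \<subseteq> monomials gs (\<lambda>i. if i = j then ?d else 1)"
      by (auto simp: monomial_single[OF j, symmetric] intro!: monomialsI)
    then have "Q.span ((\<lambda>k. gs ! j ^ k) ` {..<?d}) \<subseteq> bounded_span gs (\<lambda>i. if i = j then ?d else 1)"
      unfolding bounded_span_def by (rule Q.span_mono)
    then show ?thesis using root_power_in_span[OF p] by blast
  qed
  have "monomials gs D \<subseteq> bounded_span gs (D(j := ?d))"
  proof
    fix x assume "x \<in> monomials gs D"
    then obtain e where e: "x = monomial gs e" "\<And>i. i < length gs \<Longrightarrow> e i < D i"
      by (rule monomialsE) auto
    have "x = monomial gs (e(j := 0)) * gs ! j ^ e j"
      unfolding e(1) monomial_single[OF j, symmetric] monomial_mult by (rule monomial_cong) auto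
    moreover have "monomial gs (e(j := 0)) \<in> bounded_span gs (D(j := 1))"
      by (rule bounded_spanI) (use e(2) in auto)
    ultimately have "x \<in> bounded_span gs (\<lambda>i. (D(j := 1)) i + (if i = j then ?d else 1) - 1)"
      using bounded_span_mult power by metis
    also have "\<dots> \<subseteq> bounded_span gs (D(j := ?d))" by (rule bounded_span_mono) auto
    finally show "x \<in> bounded_span gs (D(j := ?d))" .
  qed
  then have "Q.span (monomials gs D) \<subseteq> Q.span (bounded_span gs (D(j := ?d)))"
    by (rule Q.span_mono)
  then show ?thesis unfolding bounded_span_span by (simp only: bounded_span_def)
qed

definition exponent_box :: "nat \<Rightarrow> nat \<Rightarrow> (nat \<Rightarrow> nat) set" where
  "exponent_box n D = {\<beta>. (\<forall>j<n. \<beta> j \<le> D) \<and> (\<forall>j. n \<le> j \<longrightarrow> \<beta> j = 0)}"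

lemma exponent_box_finite_card:
  "finite (exponent_box n D) \<and> card (exponent_box n D) = (D + 1) ^ n"
proof -
  have bij: "bij_betw (\<lambda>f j. if j < n then f j else 0) (PiE {..<n} (\<lambda>_. {..D})) (exponent_box n D)"
  proof (rule bij_betw_byWitness[where f' = "\<lambda>\<beta>. restrict \<beta> {..<n}"])
    show "\<forall>f\<in>PiE {..<n} (\<lambda>_. {..D}). restrict (\<lambda>j. if j < n then f j else 0) {..<n} = f"
      by (auto simp: fun_eq_iff PiE_def extensional_def)
    show "\<forall>\<beta>\<in>exponent_box n D. (\<lambda>j. if j < n then restrict \<beta> {..<n} j else 0) = \<beta>"
      by (auto simp: exponent_box_def fun_eq_iff)
    show "(\<lambda>f j. if j < n then f j else 0) ` PiE {..<n} (\<lambda>_. {..D}) \<subseteq> exponent_box n D"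
    proof (rule image_subsetI)
      fix f assume "f \<in> PiE {..<n} (\<lambda>_. {..D})"
      then have "\<forall>j<n. f j \<le> D" by (simp add: PiE_iff)
      then show "(\<lambda>j. if j < n then f j else 0) \<in> exponent_box n D"
        by (simp add: exponent_box_def)
    qed
    show "(\<lambda>\<beta>. restrict \<beta> {..<n}) ` exponent_box n D \<subseteq> PiE {..<n} (\<lambda>_. {..D})"
      by (rule image_subsetI) (simp add: exponent_box_def)
  qed
  have "finite (PiE {..<n} (\<lambda>_. {..D}))" by (intro finite_PiE) auto
  then show ?thesis
    using bij_betw_finite[OF bij] bij_betw_same_card[OF bij] by (simp add: card_PiE)
qed

text \<open>The arithmetic heart of the counting argument: with \<open>m + 1\<close> unknowns of height
  \<open>D\<close>, the number \<open>(D + 1) ^ (m + 1)\<close> of monomials eventually beats the dimension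
  \<open>L ^ m * C\<close> of the space they land in, \<open>L\<close> being linear in \<open>D\<close>.\<close>
lemma counting_estimate:
  fixes m N C :: nat
  defines "D \<equiv> (Suc m * (N + 2) + 1) ^ m * C"
  shows "(Suc m * (N * D + 2) + 1) ^ m * C < (D + 1) ^ Suc m"
proof -
  define K where "K = Suc m * (N + 2) + 1"
  have "N * D + 2 \<le> (N + 2) * (D + 1)" by (simp add: algebra_simps)
  then have "Suc m * (N * D + 2) + 1 \<le> K * (D + 1)"
    unfolding K_def by (simp add: algebra_simps)
  then have "(Suc m * (N * D + 2) + 1) ^ m * C \<le> (K * (D + 1)) ^ m * C"
    by (intro mult_right_mono power_mono) auto
  also have "\<dots> = (K ^ m * C) * (D + 1) ^ m"
    by (simp only: power_mult_distrib mult.commute mult.left_commute)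
  also have "K ^ m * C = D" unfolding D_def K_def ..
  also have "D * (D + 1) ^ m < (D + 1) * (D + 1) ^ m" by simp
  also have "\<dots> = (D + 1) ^ Suc m" by simp
  finally show ?thesis .
qed

lemma clear_denominators:
  fixes y P Q :: "nat \<Rightarrow> complex"
  assumes "\<And>j. j < n \<Longrightarrow> Q j \<noteq> 0 \<and> y j = P j / Q j" and "\<And>j. j < n \<Longrightarrow> \<beta> j \<le> D"
  shows "(\<Prod>j<n. P j ^ \<beta> j * Q j ^ (D - \<beta> j)) = (\<Prod>j<n. y j ^ \<beta> j) * (\<Prod>j<n. Q j ^ D)"
proof -
  have "P j ^ \<beta> j * Q j ^ (D - \<beta> j) = y j ^ \<beta> j * Q j ^ D" if "j < n" for j
  proof -
    have "P j = y j * Q j" using assms(1)[OF that] by simp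
    then have "P j ^ \<beta> j * Q j ^ (D - \<beta> j) = y j ^ \<beta> j * Q j ^ (\<beta> j + (D - \<beta> j))"
      by (simp add: power_mult_distrib power_add)
    then show ?thesis using assms(2)[OF that] by simp
  qed
  then show ?thesis by (simp add: prod.distrib)
qed

lemma gen_field_subfield: "subfield_C (gen_field S)"
  unfolding gen_field_def subfield_C_def by auto

lemma gen_field_least: "subfield_C F \<Longrightarrow> S \<subseteq> F \<Longrightarrow> gen_field S \<subseteq> F"
  unfolding gen_field_def by auto

lemma gen_field_base: "x \<in> S \<Longrightarrow> x \<in> gen_field S"
  unfolding gen_field_def by auto

text \<open>Its elements are quotients of elements of the finite-dimensional
  \<open>\<rat>\<close>-spaces \<open>layer N\<close>, spanned by monomials of degree \<open>< N\<close> in each \<open>ts ! j\<close>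
  and of degree below that of a fixed annihilating polynomial in each \<open>as ! k\<close>.\<close>
locale algebraic_extension =
  fixes ts as :: "complex list"
  assumes algebraic_as: "\<And>a. a \<in> set as \<Longrightarrow> algebraic a"
begin

abbreviation gens :: "complex list" where "gens \<equiv> ts @ as"

definition annihilator :: "nat \<Rightarrow> complex poly" where
  "annihilator k = (SOME p. (\<forall>i. coeff p i \<in> \<rat>) \<and> p \<noteq> 0 \<and> poly p (as ! k) = 0)"

lemma annihilator:
  assumes "k < length as"
  shows "\<forall>i. coeff (annihilator k) i \<in> \<rat>" "annihilator k \<noteq> 0" "poly (annihilator k) (as ! k) = 0"
proof -
  have "\<exists>p. (\<forall>i. coeff p i \<in> \<rat>) \<and> p \<noteq> 0 \<and> poly p (as ! k) = 0"
    using algebraic_as[OF nth_mem[OF assms]] by (simp add: algebraic_altdef)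
  from someI_ex[OF this] show "\<forall>i. coeff (annihilator k) i \<in> \<rat>" "annihilator k \<noteq> 0"
      "poly (annihilator k) (as ! k) = 0"
    unfolding annihilator_def by blast+
qed

definition alg_degree :: "nat \<Rightarrow> nat" where
  "alg_degree k = degree (annihilator k)"

lemma alg_degree_pos:
  assumes "k < length as"
  shows "0 < alg_degree k"
proof (rule ccontr)
  assume "\<not> 0 < alg_degree k"
  then have d0: "degree (annihilator k) = 0" by (simp add: alg_degree_def)
  then have "poly (annihilator k) (as ! k) = coeff (annihilator k) 0" by (simp add: poly_altdef)
  moreover have "coeff (annihilator k) 0 \<noteq> 0"
    using annihilator(2)[OF assms] d0 by (metis leading_coeff_0_iff)
  ultimately show False using annihilator(3)[OF assms] by simp
qed

definition bound :: "nat \<Rightarrow> nat \<Rightarrow> nat" where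
  "bound N j = (if j < length ts then N else alg_degree (j - length ts))"

definition layer :: "nat \<Rightarrow> complex set" where
  "layer N = bounded_span gens (bound N)"

lemma reduce_algebraic:
  "bounded_span gens D \<subseteq> bounded_span gens (\<lambda>j. if j < length ts then D j else bound N j)"
proof -
  define m where "m = length ts"
  define D' where "D' k = (\<lambda>j. if m \<le> j \<and> j < m + k then alg_degree (j - m) else D j)" for k
  have reduced: "bounded_span gens D \<subseteq> bounded_span gens (D' k)" if "k \<le> length as" for k
    using that
  proof (induction k)
    case 0
    have "D' 0 = D" by (auto simp: D'_def)
    then show ?case by simp
  next
    case (Suc k)
    then have k: "k < length as" by simp
    have "gens ! (m + k) = as ! k" by (simp add: m_def nth_append)
    then have "bounded_span gens (D' k) \<subseteq> bounded_span gens ((D' k)(m + k := alg_degree k))"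
      using annihilator[OF k] unfolding alg_degree_def
      by (intro bounded_span_reduce) (auto simp: m_def k)
    also have "(D' k)(m + k := alg_degree k) = D' (Suc k)"
      by (auto simp: fun_eq_iff D'_def)
    finally show ?case using Suc by simp
  qed
  have "bounded_span gens D \<subseteq> bounded_span gens (D' (length as))" by (rule reduced) simp
  also have "\<dots> \<subseteq> bounded_span gens (\<lambda>j. if j < length ts then D j else bound N j)"
    by (rule bounded_span_mono) (auto simp: D'_def m_def bound_def)
  finally show ?thesis by simp
qed

lemma layer_mono: "N \<le> N' \<Longrightarrow> layer N \<subseteq> layer N'"
  unfolding layer_def by (rule bounded_span_mono) (auto simp: bound_def)

lemma layer_add: "x \<in> layer N \<Longrightarrow> y \<in> layer N \<Longrightarrow> x + y \<in> layer N"
  and layer_diff: "x \<in> layer N \<Longrightarrow> y \<in> layer N \<Longrightarrow> x - y \<in> layer N"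
  and layer_zero: "0 \<in> layer N"
  unfolding layer_def by (metis Q.span_add Q.span_diff Q.span_zero bounded_span_span)+

lemma layer_mult:
  assumes "x \<in> layer N" "y \<in> layer N'"
  shows "x * y \<in> layer (N + N')"
proof -
  have "x * y \<in> bounded_span gens (\<lambda>j. bound N j + bound N' j - 1)"
    using assms unfolding layer_def by (rule bounded_span_mult)
  also have "\<dots> \<subseteq> bounded_span gens (\<lambda>j. if j < length ts then bound N j + bound N' j - 1
                                              else bound (N + N') j)"
    by (rule reduce_algebraic)
  also have "\<dots> \<subseteq> layer (N + N')"
    unfolding layer_def by (rule bounded_span_mono) (auto simp: bound_def)
  finally show ?thesis .
qed

lemma layer_one: "1 \<le> N \<Longrightarrow> 1 \<in> layer N"
  unfolding layer_def monomial_zero[of gens, symmetric]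
  by (rule bounded_spanI) (auto simp: bound_def alg_degree_pos)

lemma layer_power: "x \<in> layer N \<Longrightarrow> x ^ k \<in> layer (N * k + 1)"
proof (induction k)
  case (Suc k)
  then have "x * x ^ k \<in> layer (N + (N * k + 1))" by (intro layer_mult)
  then show ?case by (simp add: algebra_simps)
qed (simp add: layer_one)

lemma layer_prod:
  "finite A \<Longrightarrow> (\<And>j. j \<in> A \<Longrightarrow> f j \<in> layer N) \<Longrightarrow> prod f A \<in> layer (card A * N + 1)"
proof (induction A rule: finite_induct)
  case (insert x F)
  then have "f x * prod f F \<in> layer (N + (card F * N + 1))" by (intro layer_mult) auto
  then show ?case using insert by (simp add: algebra_simps)
qed (simp add: layer_one)

lemma gens_in_layer:
  assumes "x \<in> set gens"
  shows "x \<in> layer 2"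
proof -
  obtain j where j: "j < length gens" "x = gens ! j" using assms by (metis in_set_conv_nth)
  let ?D = "\<lambda>i. if i = j then 2 else 1 :: nat"
  have "x \<in> bounded_span gens ?D"
    using j monomial_single[OF j(1), of 1] bounded_spanI[of gens "\<lambda>i. if i = j then 1 else 0" ?D]
    by auto
  also have "\<dots> \<subseteq> bounded_span gens (\<lambda>i. if i < length ts then ?D i else bound 2 i)"
    by (rule reduce_algebraic)
  also have "\<dots> \<subseteq> layer 2"
    unfolding layer_def by (rule bounded_span_mono) (auto simp: bound_def)
  finally show ?thesis .
qed

lemma card_layer_basis:
  "card (monomials gens (bound N)) \<le> N ^ length ts * (\<Prod>k<length as. alg_degree k)"
proof -
  have "(\<Prod>j<length ts + r. bound N j) = N ^ length ts * (\<Prod>k<r. alg_degree k)" for r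
    by (induction r) (simp_all add: bound_def)
  then show ?thesis using card_monomials[of gens "bound N"] by simp
qed

definition fractions :: "complex set" where
  "fractions = {P / Q | N P Q. P \<in> layer N \<and> Q \<in> layer N \<and> Q \<noteq> 0}"

lemma fractionsI:
  assumes "P \<in> layer N" "Q \<in> layer N'" "Q \<noteq> 0"
  shows "P / Q \<in> fractions"
proof -
  have "P \<in> layer (max N N')" "Q \<in> layer (max N N')"
    using assms layer_mono[of N "max N N'"] layer_mono[of N' "max N N'"] by auto
  with assms(3) show ?thesis unfolding fractions_def by blast
qed

lemma fractionsE:
  assumes "z \<in> fractions"
  obtains N P Q where "P \<in> layer N" "Q \<in> layer N" "Q \<noteq> 0" "z = P / Q"
  using assms unfolding fractions_def by blast

lemma fractions_subfield: "subfield_C fractions"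
  unfolding subfield_C_def
proof (intro conjI ballI impI)
  show "0 \<in> fractions" "1 \<in> fractions"
    using fractionsI[OF layer_zero layer_one[of 1]] fractionsI[OF layer_one layer_one[of 1]] by auto
  fix x y assume "x \<in> fractions" "y \<in> fractions"
  then obtain N1 P1 Q1 N2 P2 Q2
    where 1: "P1 \<in> layer N1" "Q1 \<in> layer N1" "Q1 \<noteq> 0" "x = P1 / Q1"
      and 2: "P2 \<in> layer N2" "Q2 \<in> layer N2" "Q2 \<noteq> 0" "y = P2 / Q2"
    by (metis fractionsE)
  have den: "Q1 * Q2 \<in> layer (N1 + N2)" "Q1 * Q2 \<noteq> 0" using 1 2 layer_mult by auto
  have num: "P1 * Q2 \<in> layer (N1 + N2)" "Q1 * P2 \<in> layer (N1 + N2)" using 1 2 layer_mult by auto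
  have "x + y = (P1 * Q2 + Q1 * P2) / (Q1 * Q2)" "x - y = (P1 * Q2 - Q1 * P2) / (Q1 * Q2)"
    using 1 2 by (simp_all add: field_simps)
  then show "x + y \<in> fractions" "x - y \<in> fractions"
    using fractionsI[OF layer_add[OF num] den] fractionsI[OF layer_diff[OF num] den] by simp_all
  show "x * y \<in> fractions"
    using fractionsI[OF layer_mult[OF 1(1) 2(1)] den] 1 2 by simp
next
  fix x assume "x \<in> fractions" "x \<noteq> 0"
  then obtain N P Q where "P \<in> layer N" "Q \<in> layer N" "Q \<noteq> 0" "x = P / Q" "P \<noteq> 0"
    by (metis fractionsE divide_eq_0_iff)
  then show "inverse x \<in> fractions" using fractionsI[of Q N P N] by simp
qed

lemma gen_field_subset_fractions: "gen_field (set ts \<union> set as) \<subseteq> fractions"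
proof (rule gen_field_least[OF fractions_subfield], rule subsetI)
  fix z assume "z \<in> set ts \<union> set as"
  then have "z \<in> layer 2" by (intro gens_in_layer) simp
  then show "z \<in> fractions" using fractionsI[OF _ layer_one[of 1], of z] by simp
qed

lemma layer_cleared_monomial:
  assumes "\<And>j. j < n \<Longrightarrow> P j \<in> layer N \<and> Q j \<in> layer N" and "\<And>j. j < n \<Longrightarrow> \<beta> j \<le> D"
  shows "(\<Prod>j<n. P j ^ \<beta> j * Q j ^ (D - \<beta> j)) \<in> layer (n * (N * D + 2) + 1)"
proof -
  have "P j ^ \<beta> j * Q j ^ (D - \<beta> j) \<in> layer (N * D + 2)" if "j < n" for j
  proof -
    have "P j ^ \<beta> j * Q j ^ (D - \<beta> j) \<in> layer ((N * \<beta> j + 1) + (N * (D - \<beta> j) + 1))"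
      using assms(1)[OF that] by (intro layer_mult layer_power) auto
    moreover have "N * \<beta> j + N * (D - \<beta> j) = N * D"
      using assms(2)[OF that] by (simp flip: add_mult_distrib2)
    ultimately show ?thesis by (simp add: algebra_simps)
  qed
  then have "(\<Prod>j<n. P j ^ \<beta> j * Q j ^ (D - \<beta> j)) \<in> layer (card {..<n} * (N * D + 2) + 1)"
    by (intro layer_prod) auto
  then show ?thesis by simp
qed

lemma common_layer:
  assumes "set ys \<subseteq> fractions"
  shows "\<exists>N P Q. \<forall>j < length ys. P j \<in> layer N \<and> Q j \<in> layer N \<and> Q j \<noteq> 0 \<and> ys ! j = P j / Q j"
proof -
  have "\<forall>j<length ys. \<exists>N P Q. P \<in> layer N \<and> Q \<in> layer N \<and> Q \<noteq> 0 \<and> ys ! j = P / Q"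
    using assms nth_mem unfolding fractions_def by blast
  then obtain Nf P Q where NPQ: "\<And>j. j < length ys \<Longrightarrow>
      P j \<in> layer (Nf j) \<and> Q j \<in> layer (Nf j) \<and> Q j \<noteq> 0 \<and> ys ! j = P j / Q j"
    by metis
  have "Nf j \<le> (\<Sum>j<length ys. Nf j)" if "j < length ys" for j
    using that by (intro member_le_sum) auto
  with NPQ layer_mono show ?thesis by blast
qed

text \<open>Write \<open>ys ! j = P j / Q j\<close> in a common layer
  and clear denominators in all monomials \<open>ys ^ \<beta>\<close> with exponents at most \<open>D\<close>; the
  resulting numerators \<open>v \<beta>\<close> are too many for the layer containing them.\<close>
lemma fractions_alg_dependent:
  assumes len: "length ys = length ts + 1" and sub: "set ys \<subseteq> fractions"
  shows "\<not> alg_indep_Q ys"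
proof
  assume indep: "alg_indep_Q ys"
  obtain N P Q where PQ: "\<And>j. j < length ys \<Longrightarrow>
      P j \<in> layer N \<and> Q j \<in> layer N \<and> Q j \<noteq> 0 \<and> ys ! j = P j / Q j"
    using common_layer[OF sub] by blast
  define n m C where "n = length ys" and "m = length ts" and "C = (\<Prod>k<length as. alg_degree k)"
  define D where "D = (Suc m * (N + 2) + 1) ^ m * C"
  define L where "L = Suc m * (N * D + 2) + 1"
  define B where "B = exponent_box n D"
  define v where "v \<beta> = (\<Prod>j<n. P j ^ \<beta> j * Q j ^ (D - \<beta> j))" for \<beta>
  define QD where "QD = (\<Prod>j<n. Q j ^ D)"
  have n: "n = Suc m" using len by (simp add: n_def m_def)
  have QD: "QD \<noteq> 0" using PQ unfolding QD_def n_def by simp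
  have B: "\<beta> j \<le> D" if "\<beta> \<in> B" "j < n" for \<beta> j
    using that by (simp add: B_def exponent_box_def)
  have v_eq: "v \<beta> = (\<Prod>j<n. ys ! j ^ \<beta> j) * QD" if "\<beta> \<in> B" for \<beta>
    unfolding v_def QD_def using PQ B[OF that] by (intro clear_denominators) (auto simp: n_def)
  have v_in: "v \<beta> \<in> layer L" if "\<beta> \<in> B" for \<beta>
  proof -
    have "v \<beta> \<in> layer (n * (N * D + 2) + 1)"
      unfolding v_def using PQ B[OF that] by (intro layer_cleared_monomial) (auto simp: n_def)
    then show ?thesis by (simp add: L_def n)
  qed
  have finB: "finite B" using exponent_box_finite_card[of n D] by (simp add: B_def)
  have card: "card (monomials gens (bound L)) < card B"
    using card_layer_basis[of L] counting_estimate[of m N C] exponent_box_finite_card[of n D]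
    by (simp add: L_def D_def C_def B_def n m_def)
  have v_span: "v ` B \<subseteq> Q.span (monomials gens (bound L))"
    using v_in unfolding layer_def bounded_span_def by blast
  obtain c where c: "(\<Sum>\<beta>\<in>B. of_rat (c \<beta>) * v \<beta>) = 0" "\<exists>\<beta>\<in>B. c \<beta> \<noteq> 0"
    by (rule Q_combination_vanishes[OF finite_monomials finB v_span card])
  have "(\<Sum>\<beta>\<in>B. of_rat (c \<beta>) * (\<Prod>j<n. ys ! j ^ \<beta> j)) * QD = 0"
    using c(1) by (simp add: sum_distrib_right v_eq mult.assoc)
  then have "(\<Sum>\<beta>\<in>B. of_rat (c \<beta>) * (\<Prod>j<n. ys ! j ^ \<beta> j)) = 0" using QD by simp
  then have "\<forall>\<beta>\<in>B. c \<beta> = 0"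
    using indep finB
    unfolding alg_indep_Q_def B_def exponent_box_def n_def by blast
  with c(2) show False by blast
qed

lemma trdeg_bound:
  assumes "S \<subseteq> gen_field (set ts \<union> set as)"
  shows "\<not> trdeg_ge (gen_field S) (length ts + 1)"
proof
  assume "trdeg_ge (gen_field S) (length ts + 1)"
  then obtain ys where ys: "set ys \<subseteq> gen_field S" "length ys = length ts + 1" "alg_indep_Q ys"
    unfolding trdeg_ge_def by blast
  have "gen_field S \<subseteq> gen_field (set ts \<union> set as)"
    using assms by (rule gen_field_least[OF gen_field_subfield])
  with ys(1) gen_field_subset_fractions have "set ys \<subseteq> fractions" by blast
  with fractions_alg_dependent[OF ys(2)] ys(3) show False by blast
qed

end

lemma gen_field_mono: "S \<subseteq> T \<Longrightarrow> gen_field S \<subseteq> gen_field T"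
  by (meson gen_field_base gen_field_least gen_field_subfield subset_iff)

lemma gen_field_one: "1 \<in> gen_field S"
  and gen_field_add: "x \<in> gen_field S \<Longrightarrow> y \<in> gen_field S \<Longrightarrow> x + y \<in> gen_field S"
  and gen_field_mult: "x \<in> gen_field S \<Longrightarrow> y \<in> gen_field S \<Longrightarrow> x * y \<in> gen_field S"
  and gen_field_inverse: "x \<in> gen_field S \<Longrightarrow> inverse x \<in> gen_field S"
  using gen_field_subfield[of S] unfolding subfield_C_def by (blast, blast, blast, metis inverse_zero)

lemma schanuel_contradiction:
  assumes "schanuel" "lin_indep_Q xs" "\<forall>a\<in>set as. algebraic a"
    and "set xs \<union> exp ` set xs \<subseteq> gen_field (set ts \<union> set as)"
    and "length xs = length ts + 1"
  shows False
proof -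
  interpret algebraic_extension ts as using assms(3) by unfold_locales blast
  have "trdeg_ge (gen_field (set xs \<union> exp ` set xs)) (length xs)"
    using assms(1,2) unfolding schanuel_def by blast
  with trdeg_bound[OF assms(4)] assms(5) show False by simp
qed

lemma lin_indep_Q_snoc:
  assumes indep: "lin_indep_Q xs" and new: "\<And>q. x \<noteq> (\<Sum>i<length xs. of_rat (q i) * xs ! i)"
  shows "lin_indep_Q (xs @ [x])"
  unfolding lin_indep_Q_def
proof (rule allI, rule impI)
  fix q :: "nat \<Rightarrow> rat"
  let ?n = "length xs"
  assume "(\<Sum>i<length (xs @ [x]). of_rat (q i) * (xs @ [x]) ! i) = 0"
  then have sum: "(\<Sum>i<?n. of_rat (q i) * xs ! i) + of_rat (q ?n) * x = 0"
    by (simp add: nth_append)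
  have qn: "q ?n = 0"
  proof (rule ccontr)
    let ?S = "\<Sum>i<?n. of_rat (q i) * xs ! i"
    assume "q ?n \<noteq> 0"
    moreover have "of_rat (q ?n) * x = - ?S" using sum by (metis add.commute add_eq_0_iff)
    ultimately have "x = - ?S / of_rat (q ?n)" by (simp add: field_simps)
    also have "\<dots> = (\<Sum>i<?n. - (of_rat (q i) * xs ! i) / of_rat (q ?n))"
      by (simp add: sum_divide_distrib sum_negf)
    also have "\<dots> = (\<Sum>i<?n. of_rat (- q i / q ?n) * xs ! i)"
      by (rule sum.cong) (simp_all add: of_rat_divide of_rat_minus)
    finally show False using new[of "\<lambda>i. - q i / q ?n"] by simp
  qed
  with sum indep have "\<forall>i<?n. q i = 0" unfolding lin_indep_Q_def by simp
  with qn show "\<forall>i<length (xs @ [x]). q i = 0" by (simp add: less_Suc_eq)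
qed

lemma lin_indep_Q_single: "a \<noteq> 0 \<Longrightarrow> lin_indep_Q [a]"
  unfolding lin_indep_Q_def by simp

lemma lin_indep_Q_pair:
  assumes "a \<noteq> 0" "r \<notin> \<rat>"
  shows "lin_indep_Q [a, r * a]"
proof -
  have "r * a \<noteq> of_rat p * a" for p using assms by (metis Rats_of_rat mult_cancel_right)
  then show ?thesis using lin_indep_Q_snoc[OF lin_indep_Q_single[OF assms(1)], of "r * a"] by simp
qed

lemma lin_indep_Q_triple:
  assumes "a \<noteq> 0" "r \<notin> \<rat>" and s: "\<And>p q. s \<noteq> of_rat p + of_rat q * r"
  shows "lin_indep_Q [a, r * a, s * a]"
proof -
  have "s * a \<noteq> of_rat p * a + of_rat q * (r * a)" for p q
    using s[of p q] assms(1) by (metis distrib_right mult.assoc mult_cancel_right)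
  then show ?thesis
    using lin_indep_Q_snoc[OF lin_indep_Q_pair[OF assms(1,2)], of "s * a"]
    by (simp add: eval_nat_numeral)
qed

lemma of_real_of_rat_complex: "complex_of_real (of_rat q) = of_rat q"
  by (cases q) (simp add: of_rat_rat)

lemma ii_irrational: "\<i> \<notin> \<rat>"
proof
  assume "\<i> \<in> \<rat>"
  then obtain r where "\<i> = complex_of_real (of_rat r)"
    by (metis Rats_cases of_real_of_rat_complex)
  then have "Im \<i> = Im (complex_of_real (of_rat r))" by simp
  then show False by simp
qed

lemma sqrt_2_irrational: "sqrt 2 \<notin> \<rat>"
proof
  assume "sqrt 2 \<in> \<rat>"
  then obtain m n :: nat
    where n: "n \<noteq> 0" and sqrt_rat: "\<bar>sqrt 2\<bar> = m / n" and "coprime m n"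
    by (rule Rats_abs_nat_div_natE)
  have eq: "m\<^sup>2 = 2 * n\<^sup>2"
  proof -
    from n and sqrt_rat have "m = \<bar>sqrt 2\<bar> * n" by simp
    then have "real (m\<^sup>2) = (sqrt 2)\<^sup>2 * real (n\<^sup>2)" by (simp add: power_mult_distrib)
    also have "(sqrt 2)\<^sup>2 = 2" by simp
    finally show ?thesis by (simp only: of_nat_eq_iff[symmetric])
  qed
  have "2 dvd m \<and> 2 dvd n"
  proof
    from eq have "2 dvd m\<^sup>2" ..
    then show "2 dvd m" by (rule prime_dvd_power[OF two_is_prime_nat])
    then obtain k where "m = 2 * k" ..
    with eq have "n\<^sup>2 = 2 * k\<^sup>2" by (simp add: power2_eq_square)
    then have "2 dvd n\<^sup>2" ..
    then show "2 dvd n" by (rule prime_dvd_power[OF two_is_prime_nat])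
  qed
  then have "2 dvd gcd m n" by simp
  with \<open>coprime m n\<close> show False by simp
qed

lemma algebraic_rat_plus_rat_sqrt_2: "algebraic (of_rat a + of_rat b * sqrt 2 :: real)"
proof (rule algebraicI')
  let ?p = "[:(of_rat a)\<^sup>2 - 2 * (of_rat b)\<^sup>2, - 2 * of_rat a, 1 :: real:]"
  have "poly ?p (of_rat a + of_rat b * sqrt 2) = (of_rat b)\<^sup>2 * ((sqrt 2)\<^sup>2 - 2)"
    by (simp add: algebra_simps power2_eq_square)
  then show "poly ?p (of_rat a + of_rat b * sqrt 2) = 0" by simp
  show "?p \<noteq> 0" by simp
  show "coeff ?p i \<in> \<rat>" for i
    by (cases i; cases "i - 1"; cases "i - 2") (auto simp: coeff_pCons)
qed

lemma exp_ii_half_pi: "exp (\<i> * complex_of_real (pi / 2)) = \<i>"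
  using exp_Ln[of \<i>] by simp

lemma ii_powr_real: "\<i> powr complex_of_real u = exp (complex_of_real u * \<i> * complex_of_real (pi / 2))"
  by (simp add: powr_def mult.assoc)

lemma ii_powr_ii: "\<i> powr \<i> = complex_of_real (exp (- (pi / 2)))"
proof -
  have "\<i> powr \<i> = exp (\<i> * Ln \<i>)" by (simp add: powr_def)
  also have "\<i> * Ln \<i> = complex_of_real (- (pi / 2))" by simp
  finally show ?thesis by (simp only: exp_of_real)
qed

text \<open>\<open>e ^ (\<pi> / 2)\<close> is transcendental: otherwise \<open>\<pi> / 2, i \<pi> / 2\<close> and their exponentials
  \<open>e ^ (\<pi> / 2), i\<close> would all lie in \<open>\<rat>(\<pi> / 2, i, e ^ (\<pi> / 2))\<close>, whose transcendence
  degree is at most one.\<close>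
lemma exp_half_pi_transcendental:
  assumes "schanuel"
  shows "\<not> algebraic (exp (pi / 2))"
proof
  define c E where "c = complex_of_real (pi / 2)" and "E = complex_of_real (exp (pi / 2))"
  assume "algebraic (exp (pi / 2))"
  then have "algebraic E" by (simp add: E_def)
  moreover have "exp c = E" unfolding c_def E_def by (simp only: exp_of_real)
  moreover have "exp (\<i> * c) = \<i>" unfolding c_def by (rule exp_ii_half_pi)
  moreover have "lin_indep_Q [c, \<i> * c]"
    unfolding c_def by (rule lin_indep_Q_pair) (simp_all add: ii_irrational)
  moreover have "c \<in> gen_field (set [c] \<union> set [\<i>, E])" "\<i> \<in> gen_field (set [c] \<union> set [\<i>, E])"
    "E \<in> gen_field (set [c] \<union> set [\<i>, E])" by (simp_all add: gen_field_base)
  ultimately show False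
    by (intro schanuel_contradiction[OF assms, of "[c, \<i> * c]" "[\<i>, E]" "[c]"])
       (auto intro: gen_field_mult)
qed

text \<open>If \<open>u\<close> is an irrational real number in \<open>\<rat>(e ^ (\<pi> / 2))\<close>, then
  \<open>i ^ u = e ^ (u i \<pi> / 2)\<close> is transcendental: \<open>\<pi> / 2, i \<pi> / 2, u i \<pi> / 2\<close> are linearly
  independent and, with their exponentials, lie in \<open>\<rat>(\<pi> / 2, e ^ (\<pi> / 2), i, i ^ u)\<close>.\<close>
lemma ii_powr_transcendental:
  assumes "schanuel" and irrational: "u \<notin> \<rat>"
    and u: "complex_of_real u \<in> gen_field {complex_of_real (exp (pi / 2))}"
  shows "\<not> algebraic (\<i> powr complex_of_real u)"
proof
  define c E where "c = complex_of_real (pi / 2)" and "E = complex_of_real (exp (pi / 2))"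
  define X where "X = \<i> powr complex_of_real u"
  let ?F = "gen_field (set [c, E] \<union> set [\<i>, X])"
  assume "algebraic (\<i> powr complex_of_real u)"
  then have "algebraic X" by (simp add: X_def)
  moreover have "exp c = E" unfolding c_def E_def by (simp only: exp_of_real)
  moreover have "exp (\<i> * c) = \<i>" unfolding c_def by (rule exp_ii_half_pi)
  moreover have "exp (complex_of_real u * \<i> * c) = X" by (simp add: X_def c_def ii_powr_real)
  moreover have "complex_of_real u * \<i> \<noteq> of_rat p + of_rat q * \<i>" for p q
  proof
    assume "complex_of_real u * \<i> = of_rat p + of_rat q * \<i>"
    then have "Im (complex_of_real u * \<i>) = Im (complex_of_real (of_rat p) + complex_of_real (of_rat q) * \<i>)"
      by (simp add: of_real_of_rat_complex)
    with irrational show False by simp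
  qed
  then have "lin_indep_Q [c, \<i> * c, complex_of_real u * \<i> * c]"
    unfolding c_def by (intro lin_indep_Q_triple) (simp_all add: ii_irrational)
  moreover have "complex_of_real u \<in> ?F"
    using u gen_field_mono[of "{E}" "set [c, E] \<union> set [\<i>, X]"] by (auto simp: E_def)
  moreover have "c \<in> ?F" "\<i> \<in> ?F" "E \<in> ?F" "X \<in> ?F" by (simp_all add: gen_field_base)
  ultimately show False
    by (intro schanuel_contradiction[OF assms(1), of "[c, \<i> * c, complex_of_real u * \<i> * c]"
          "[\<i>, X]" "[c, E]"]) (auto intro: gen_field_mult)
qed

text \<open>\<open>i ^ i ^ i = i ^ u\<close> with \<open>u = e ^ (- \<pi> / 2)\<close>.\<close>
lemma ii_tower_transcendental:
  assumes "schanuel"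
  shows "\<not> algebraic (\<i> powr (\<i> powr \<i>))"
proof -
  let ?E = "complex_of_real (exp (pi / 2))"
  have "exp (- (pi / 2)) \<notin> \<rat>"
  proof
    assume "exp (- (pi / 2)) \<in> \<rat>"
    then have "algebraic (inverse (exp (- (pi / 2))))" by (intro algebraic_inverse rat_imp_algebraic)
    with exp_half_pi_transcendental[OF assms] show False by (simp add: exp_minus)
  qed
  moreover have "complex_of_real (exp (- (pi / 2))) \<in> gen_field {?E}"
  proof -
    have "inverse ?E \<in> gen_field {?E}" by (intro gen_field_inverse gen_field_base) simp
    then show ?thesis by (simp only: of_real_inverse[symmetric] exp_minus)
  qed
  ultimately show ?thesis using ii_powr_transcendental[OF assms] by (simp add: ii_powr_ii)
qed

text \<open>\<open>i ^ e ^ \<pi> = i ^ u\<close> with \<open>u = e ^ \<pi> = (e ^ (\<pi> / 2))\<^sup>2\<close>.\<close>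
lemma ii_powr_exp_pi_transcendental:
  assumes "schanuel"
  shows "\<not> algebraic (\<i> powr complex_of_real (exp pi))"
proof -
  let ?E = "complex_of_real (exp (pi / 2))"
  have square: "exp pi = exp (pi / 2) * exp (pi / 2)" by (simp flip: exp_add)
  have "exp pi \<notin> \<rat>"
  proof
    assume "exp pi \<in> \<rat>"
    then have "algebraic (sqrt (exp pi))" by (intro algebraic_sqrt rat_imp_algebraic)
    with exp_half_pi_transcendental[OF assms] show False by (simp add: square)
  qed
  moreover have "complex_of_real (exp pi) \<in> gen_field {?E}"
    unfolding square of_real_mult by (intro gen_field_mult gen_field_base) simp_all
  ultimately show ?thesis using ii_powr_transcendental[OF assms] by blast
qed

lemma sqrt_2_powr_square: "sqrt 2 powr a * sqrt 2 powr a = exp (a * ln 2)"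
proof -
  have "sqrt 2 powr a = exp (a * ln 2 / 2)" by (simp add: powr_def ln_sqrt)
  then show ?thesis by (simp flip: exp_add)
qed

text \<open>The Gelfond-Schneider instance \<open>\<surd>2 ^ \<surd>2\<close>, from Schanuel applied to
  \<open>log 2, \<surd>2 log 2\<close> inside \<open>\<rat>(log 2, \<surd>2, \<surd>2 ^ \<surd>2)\<close>.\<close>
lemma sqrt_2_powr_sqrt_2_transcendental:
  assumes "schanuel"
  shows "\<not> algebraic (sqrt 2 powr sqrt 2)"
proof
  define l s Y where "l = complex_of_real (ln 2)" and "s = complex_of_real (sqrt 2)"
    and "Y = complex_of_real (sqrt 2 powr sqrt 2)"
  let ?F = "gen_field (set [l] \<union> set [s, Y])"
  assume "algebraic (sqrt 2 powr sqrt 2)"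
  then have "algebraic Y" by (simp add: Y_def)
  moreover have "algebraic s" unfolding s_def by (intro algebraic_of_real algebraic_sqrt) simp
  moreover have "exp l = 2" by (simp add: l_def exp_of_real)
  moreover have "exp (s * l) = Y * Y"
    by (simp add: s_def l_def Y_def sqrt_2_powr_square exp_of_real flip: of_real_mult)
  moreover have "lin_indep_Q [l, s * l]"
    by (intro lin_indep_Q_pair) (simp_all add: l_def s_def sqrt_2_irrational)
  moreover have "l \<in> ?F" "s \<in> ?F" "Y \<in> ?F" by (simp_all add: gen_field_base)
  moreover have "2 \<in> ?F" using gen_field_add[OF gen_field_one gen_field_one] by simp
  ultimately show False
    by (intro schanuel_contradiction[OF assms, of "[l, s * l]" "[s, Y]" "[l]"])
       (auto intro: gen_field_mult)
qed

text \<open>\<open>\<surd>2 ^ \<surd>2 ^ \<surd>2\<close>, from Schanuel applied to \<open>log 2, \<surd>2 log 2, Y log 2\<close> with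
  \<open>Y = \<surd>2 ^ \<surd>2\<close> transcendental, inside \<open>\<rat>(log 2, Y, \<surd>2, \<surd>2 ^ Y)\<close>.\<close>
lemma sqrt_2_tower_transcendental:
  assumes "schanuel"
  shows "\<not> algebraic (complex_of_real (sqrt 2) powr (complex_of_real (sqrt 2) powr complex_of_real (sqrt 2)))"
proof
  define l s Y Z where "l = complex_of_real (ln 2)" and "s = complex_of_real (sqrt 2)"
    and "Y = complex_of_real (sqrt 2 powr sqrt 2)"
    and "Z = complex_of_real (sqrt 2 powr (sqrt 2 powr sqrt 2))"
  let ?F = "gen_field (set [l, Y] \<union> set [s, Z])"
  assume "algebraic (complex_of_real (sqrt 2) powr (complex_of_real (sqrt 2) powr complex_of_real (sqrt 2)))"
  then have "algebraic Z" by (simp add: Z_def powr_of_real)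
  moreover have "algebraic s" unfolding s_def by (intro algebraic_of_real algebraic_sqrt) simp
  moreover have "exp l = 2" by (simp add: l_def exp_of_real)
  moreover have "exp (s * l) = Y * Y" "exp (Y * l) = Z * Z"
    by (simp_all add: s_def l_def Y_def Z_def sqrt_2_powr_square exp_of_real flip: of_real_mult)
  moreover have "Y \<noteq> of_rat p + of_rat q * s" for p q
  proof
    assume "Y = of_rat p + of_rat q * s"
    then have "sqrt 2 powr sqrt 2 = of_rat p + of_rat q * sqrt 2"
      by (simp add: Y_def s_def flip: of_real_of_rat_complex of_real_mult of_real_add)
    with sqrt_2_powr_sqrt_2_transcendental[OF assms] algebraic_rat_plus_rat_sqrt_2 show False
      by metis
  qed
  then have "lin_indep_Q [l, s * l, Y * l]"
    by (intro lin_indep_Q_triple) (simp_all add: l_def s_def sqrt_2_irrational)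
  moreover have "l \<in> ?F" "s \<in> ?F" "Y \<in> ?F" "Z \<in> ?F" by (simp_all add: gen_field_base)
  moreover have "2 \<in> ?F" using gen_field_add[OF gen_field_one gen_field_one] by simp
  ultimately show False
    by (intro schanuel_contradiction[OF assms, of "[l, s * l, Y * l]" "[s, Z]" "[l, Y]"])
       (auto intro: gen_field_mult)
qed

theorem mainTheorem4:
  assumes "schanuel"
  shows "\<not> algebraic (complex_of_real (sqrt 2) powr (complex_of_real (sqrt 2) powr complex_of_real (sqrt 2))) \<and>
         \<not> algebraic (\<i> powr (\<i> powr \<i>)) \<and>
         \<not> algebraic (\<i> powr complex_of_real (exp pi))"
  using sqrt_2_tower_transcendental[OF assms] ii_tower_transcendental[OF assms]
    ii_powr_exp_pi_transcendental[OF assms]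
  by blast

end
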